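(* If $k=2^i-1$ is a prime (with $i\ge2$), then $k\in\mathcal C_i\setminus\mathcal C_{i-1}$.
   Context: For a positive integer $m$, $\mathcal C_m$ is the set of odd positive integers $k$ for which there exist integers $0\le j_1<j_2<\cdots<j_m\le m+k-2$ with $2^{k+m}-1\equiv \sum_{i=1}^m 2^{j_i}\pmod k$. For $i=2$, $\mathcal C_{1}$ is as defined with $m=1$. *)

theory Defs
  imports "HOL-Number_Theory.Number_Theory"
begin

text \<open>C m: odd positive k admitting indices 0 <= j_1 < ... < j_m <= m+k-2
  (encoded as a set J of exactly m naturals) with 2^(k+m)-1 == sum 2^(j_i) (mod k).\<close>
definition C :: "nat \<Rightarrow> nat set" where
  "C m = {k. odd k \<and> 0 < k \<and>
      (\<exists>J::nat set. card J = m \<and> J \<subseteq> {0..m + k - 2} \<and>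
         [2 ^ (k + m) - 1 = (\<Sum>j\<in>J. 2 ^ j)] (mod k))}"

end

theory Submission imports Defs "HOL-Library.Multiset" begin

(*
  Let p = 2^i - 1 be prime, i >= 2.  Since 2^i = p + 1 and, by Fermat, 2^p == 2 (mod p),
  we get 2^(p+m) == 2^(m+1) (mod p) for every m.  Hence
   * for m = i the target residue is 2^(i+1) - 1 == 1 (mod p), and the i exponents
     {1} u {2..<i} u {i+1} have 2-power sum 3p + 1 == 1 (mod p), so p is in C i;
   * for m = i - 1 the target residue is 2^i - 1 == 0 (mod p), so p in C (i-1) would give
     a nonempty set of fewer than i exponents whose 2-power sum is a multiple of 2^i - 1.
  The latter is impossible by the classical binary-weight bound: a positive multiple of
  2^i - 1 is not a sum of fewer than i powers of two.  We prove this bound first, for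
  multisets of exponents, by repeatedly lowering an exponent a >= i to a - i (which changes
  the sum by a multiple of 2^i - 1) and merging two equal exponents a, a into a + 1; neither
  step increases the number of summands, and the process ends with distinct exponents
  below i, whose sum is at most 2^i - 1 with equality only for all of {0..<i}.
*)

abbreviation pow2_sum :: "nat multiset \<Rightarrow> nat" where
  "pow2_sum M \<equiv> \<Sum>e\<in>#M. 2 ^ e"

lemma pow2_sum_proper_subset_less:
  assumes "S \<subseteq> {0..<i}" and "S \<noteq> {0..<i}"
  shows "(\<Sum>e\<in>S. (2::nat) ^ e) < 2 ^ i - 1"
proof -
  have "\<not> {0..<i} \<subseteq> S" using assms by blast
  then obtain x where x: "x \<in> {0..<i}" "x \<notin> S" by blast
  have "(\<Sum>e\<in>S. (2::nat) ^ e) < (\<Sum>e\<in>insert x S. 2 ^ e)"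
    using x finite_subset[OF assms(1)] by simp
  also have "\<dots> \<le> (\<Sum>e\<in>{0..<i}. 2 ^ e)"
    by (rule sum_mono2) (use x assms(1) in auto)
  finally show ?thesis by (simp add: sum_power2)
qed

lemma pow2_sum_remove:
  assumes "a \<in># M"
  shows "pow2_sum M = 2 ^ a + pow2_sum (M - {#a#})"
proof -
  have "pow2_sum (add_mset a (M - {#a#})) = 2 ^ a + pow2_sum (M - {#a#})" by simp
  then show ?thesis by (simp only: insert_DiffM[OF assms])
qed

lemma pow2_sum_lower_exponent:
  assumes "a \<in># M" and "a \<ge> i"
  shows "pow2_sum M = pow2_sum (add_mset (a - i) (M - {#a#})) + 2 ^ (a - i) * (2 ^ i - 1)"
proof -
  have "pow2_sum M = 2 ^ a + pow2_sum (M - {#a#})"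
    using assms(1) by (rule pow2_sum_remove)
  also have "(2::nat) ^ a = 2 ^ (a - i) * (2 ^ i - 1) + 2 ^ (a - i)"
  proof -
    have "(2::nat) ^ a = 2 ^ (a - i) * ((2 ^ i - 1) + 1)"
      using assms(2) by (simp flip: power_add)
    then show ?thesis by (simp only: distrib_left mult_1_right)
  qed
  finally show ?thesis by (simp add: add_ac)
qed

lemma pow2_sum_merge_exponents:
  assumes "count M a \<ge> 2"
  shows "pow2_sum M = pow2_sum (add_mset (a + 1) (M - {#a, a#}))"
    and "size M = Suc (size (add_mset (a + 1) (M - {#a, a#})))"
proof -
  have "{#a, a#} \<subseteq># M" using assms by (simp add: subseteq_mset_def)
  then have M: "M = {#a, a#} + (M - {#a, a#})" by (metis subset_mset.add_diff_inverse)
  show "pow2_sum M = pow2_sum (add_mset (a + 1) (M - {#a, a#}))"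
    by (subst M) simp
  show "size M = Suc (size (add_mset (a + 1) (M - {#a, a#})))"
    by (subst M) simp
qed

lemma mset_set_set_mset_if_count_le_1:
  assumes "\<And>x. count M x \<le> 1"
  shows "M = mset_set (set_mset M)"
proof (rule multiset_eqI)
  fix x
  show "count M x = count (mset_set (set_mset M)) x"
    using assms[of x] by (cases "x \<in># M") (auto simp: count_mset_set le_Suc_eq count_eq_zero_iff)
qed

lemma pow2_sum_multiple_weight:
  assumes "M \<noteq> {#}" and "(2 ^ i - 1) dvd pow2_sum M"
  shows "i \<le> size M"
  using assms
proof (induction "pow2_sum M + size M" arbitrary: M rule: less_induct)
  case (less M)
  consider (large) a where "a \<in># M" "a \<ge> i" "i > 0"
    | (repeated) a where "count M a \<ge> 2"
    | (trivial) "i = 0"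
    | (reduced) "\<forall>a\<in>#M. a < i" "\<forall>a. count M a \<le> 1"
  proof (cases "i = 0 \<or> (\<exists>a\<in>#M. a \<ge> i) \<or> (\<exists>a. count M a \<ge> 2)")
    case True
    then show thesis using that by blast
  next
    case False
    then have "\<forall>a\<in>#M. a < i" and "\<forall>a. count M a \<le> 1"
      by (auto simp: not_le less_Suc_eq_le numeral_2_eq_2)
    then show thesis by (rule that(4))
  qed
  then show ?case
  proof cases
    case large
    define M' where "M' = add_mset (a - i) (M - {#a#})"
    have sum_M: "pow2_sum M = pow2_sum M' + 2 ^ (a - i) * (2 ^ i - 1)"
      unfolding M'_def by (rule pow2_sum_lower_exponent[OF large(1,2)])
    have size_M': "size M' = size M"
      unfolding M'_def using large(1) by (metis insert_DiffM size_add_mset)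
    have "(2::nat) ^ i > 1" using large(3) one_less_power[of "2::nat" i] by simp
    then have "pow2_sum M' < pow2_sum M" using sum_M by simp
    then have smaller: "pow2_sum M' + size M' < pow2_sum M + size M" using size_M' by simp
    have "(2 ^ i - 1) dvd pow2_sum M'"
      using less.prems(2) sum_M by (simp add: dvd_add_left_iff)
    moreover have "M' \<noteq> {#}" by (simp add: M'_def)
    ultimately have "i \<le> size M'" using less.hyps[OF smaller] by blast
    then show ?thesis using size_M' by simp
  next
    case repeated
    define M' where "M' = add_mset (a + 1) (M - {#a, a#})"
    note merge = pow2_sum_merge_exponents[OF repeated, folded M'_def]
    have smaller: "pow2_sum M' + size M' < pow2_sum M + size M" using merge by simp
    have "(2 ^ i - 1) dvd pow2_sum M'" using less.prems(2) merge(1) by simp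
    moreover have "M' \<noteq> {#}" by (simp add: M'_def)
    ultimately have "i \<le> size M'" using less.hyps[OF smaller] by blast
    then show ?thesis using merge(2) by simp
  next
    case trivial
    then show ?thesis by simp
  next
    case reduced
    define S where "S = set_mset M"
    have M: "M = mset_set S"
      unfolding S_def by (rule mset_set_set_mset_if_count_le_1) (use reduced in auto)
    have S_sub: "S \<subseteq> {0..<i}" using reduced by (auto simp: S_def)
    have sum_S: "pow2_sum M = (\<Sum>e\<in>S. 2 ^ e)" by (simp add: M sum_unfold_sum_mset)
    obtain a where "a \<in># M" by (rule multiset_nonemptyE[OF less.prems(1)])
    then have "pow2_sum M > 0" using pow2_sum_remove by simp
    then have "2 ^ i - 1 \<le> pow2_sum M" using less.prems(2) by (intro dvd_imp_le)
    then have "S = {0..<i}"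
      using pow2_sum_proper_subset_less[OF S_sub] sum_S by (metis not_less)
    then show ?thesis by (simp add: M)
  qed
qed

lemma pow2_set_sum_multiple_card:
  assumes "finite J" and "J \<noteq> {}" and "(2 ^ i - 1) dvd (\<Sum>j\<in>J. (2::nat) ^ j)"
  shows "i \<le> card J"
  using pow2_sum_multiple_weight[of "mset_set J" i] assms
  by (simp add: sum_unfold_sum_mset mset_set_empty_iff)

lemma pow2_shift_mod_odd_prime:
  fixes p :: nat
  assumes "prime p" and "odd p"
  shows "[2 ^ (p + m) = 2 ^ (m + 1)] (mod p)"
proof -
  have "\<not> p dvd 2"
    using primes_dvd_imp_eq[OF assms(1) two_is_prime_nat] assms(2) by auto
  then have "[2 ^ (p - 1) = 1] (mod p)" using fermat_theorem[OF assms(1)] by blast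
  then have "[2 ^ (p - 1) * 2 ^ (m + 1) = 1 * 2 ^ (m + 1)] (mod p)"
    by (rule cong_mult) (rule cong_refl)
  moreover have "(2::nat) ^ (p - 1) * 2 ^ (m + 1) = 2 ^ (p + m)"
    unfolding power_add[symmetric] using prime_gt_0_nat[OF assms(1)] by simp
  ultimately show ?thesis by simp
qed

lemma mersenne_basic:
  assumes "i \<ge> 2"
  shows "(2::nat) ^ i = (2 ^ i - 1) + 1" and "2 ^ i - 1 \<ge> (3::nat)" and "odd (2 ^ i - 1 :: nat)"
proof -
  have "(2::nat) ^ 2 \<le> 2 ^ i" using assms by (rule power_increasing) simp
  then show "(2::nat) ^ i = (2 ^ i - 1) + 1" and "2 ^ i - 1 \<ge> (3::nat)" by auto
  show "odd (2 ^ i - 1 :: nat)" using assms by simp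
qed

lemma mersenne_prime_in_C:
  assumes i: "i \<ge> 2" and prime: "prime (2 ^ i - 1 :: nat)"
  shows "(2 ^ i - 1 :: nat) \<in> C i"
proof -
  define p :: nat where "p = 2 ^ i - 1"
  note basic = mersenne_basic[OF i, folded p_def]
  define J where "J = {1, i + 1} \<union> {2..<i}"
  have card_J: "card J = i" unfolding J_def using i by (simp add: card_insert_if)
  have J_sub: "J \<subseteq> {0..i + p - 2}" unfolding J_def using basic(2) by auto
  have "(\<Sum>j\<in>{0..<i}. (2::nat) ^ j) = (\<Sum>j\<in>{0..<2}. 2 ^ j) + (\<Sum>j\<in>{2..<i}. 2 ^ j)"
    using i by (metis sum.atLeastLessThan_concat zero_le)
  then have "(\<Sum>j\<in>{2..<i}. (2::nat) ^ j) = p - 3"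
    by (simp add: sum_power2 p_def numeral_3_eq_3)
  then have sum_J: "(\<Sum>j\<in>J. (2::nat) ^ j) = 3 * p + 1"
    unfolding J_def using i basic by simp
  have "[2 ^ (p + i) = 2 * 2 ^ i] (mod p)"
    using pow2_shift_mod_odd_prime[OF prime[folded p_def] basic(3)] by simp
  also have "2 * 2 ^ i = 2 * p + 2" using basic(1) by simp
  finally have "[2 ^ (p + i) - 1 = (2 * p + 2) - 1] (mod p)"
    by (rule cong_diff_nat[OF _ cong_refl]) simp_all
  also have "[2 * p + 2 - 1 = 3 * p + 1] (mod p)"
    by (rule cong_sym, subst cong_altdef_nat) auto
  finally have "[2 ^ (p + i) - 1 = (\<Sum>j\<in>J. (2::nat) ^ j)] (mod p)"
    unfolding sum_J .
  then show ?thesis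
    unfolding C_def p_def[symmetric] using basic card_J J_sub by (auto simp: add.commute)
qed

text \<open>A Mersenne prime 2^i - 1 is not in C (i - 1): the target residue is 0, and a nonempty
  set of i - 1 powers of two cannot sum to a multiple of 2^i - 1.\<close>
lemma mersenne_prime_not_in_C_pred:
  assumes i: "i \<ge> 2" and prime: "prime (2 ^ i - 1 :: nat)"
  shows "(2 ^ i - 1 :: nat) \<notin> C (i - 1)"
proof
  define p :: nat where "p = 2 ^ i - 1"
  note basic = mersenne_basic[OF i, folded p_def]
  assume "p \<in> C (i - 1)"
  then obtain J where card_J: "card J = i - 1" and J_sub: "J \<subseteq> {0..i - 1 + p - 2}"
    and cong: "[2 ^ (p + (i - 1)) - 1 = (\<Sum>j\<in>J. (2::nat) ^ j)] (mod p)"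
    unfolding C_def by auto
  have "[2 ^ (p + (i - 1)) = 2 ^ i] (mod p)"
    using pow2_shift_mod_odd_prime[OF prime[folded p_def] basic(3), of "i - 1"] i by simp
  then have "[2 ^ (p + (i - 1)) - 1 = 2 ^ i - 1] (mod p)"
    by (rule cong_diff_nat[OF _ cong_refl]) simp_all
  then have "[2 ^ (p + (i - 1)) - 1 = 0] (mod p)"
    unfolding p_def[symmetric] by (simp add: cong_def)
  then have "[(\<Sum>j\<in>J. 2 ^ j) = 0] (mod p)" using cong_trans[OF cong_sym[OF cong]] by blast
  then have dvd: "(2 ^ i - 1) dvd (\<Sum>j\<in>J. (2::nat) ^ j)"
    unfolding p_def[symmetric] by (simp add: cong_0_iff)
  have "finite J" using J_sub finite_subset by blast
  moreover have "J \<noteq> {}" using card_J i by auto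
  ultimately have "i \<le> card J" using pow2_set_sum_multiple_card dvd by blast
  then show False using card_J i by simp
qed

theorem mainTheorem8:
  fixes i :: nat
  assumes "i \<ge> 2" and "prime (2 ^ i - 1 :: nat)"
  shows "(2 ^ i - 1 :: nat) \<in> C i - C (i - 1)"
  using mersenne_prime_in_C[OF assms] mersenne_prime_not_in_C_pred[OF assms] by simp

end
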